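(* Let $m\ge1$, $n=2^m-1$ and $\iota\in\dot F^m$. For every $\bar z\in F^n$ it holds that $\Omega(R_\iota+\bar z)=\Omega(R_\iota+\bar z+\bar e^{(\iota)})$.
   Context: $F^m$ denotes the vector space of binary $m$-tuples over $GF(2)$, and $\dot F^m := F^m\setminus\{0^m\}$. The coordinates of words $\bar w\in F^n$ ($n=2^m-1$) are indexed by the elements of $\dot F^m$, $\bar w=\{w_\alpha\}_{\alpha\in\dot F^m}$ (in some fixed order). $\bar e^{(\iota)}\in F^n$ is the word with a single $1$ in the coordinate indexed by $\iota$. The Hamming code is $H:=\{\bar c\in F^n \mid \sum_{\alpha\in\dot F^m} c_\alpha\alpha = 0^m\}$. For $\iota\in\dot F^m$, $R_\iota := \{\bar c\in H \mid c_\alpha=c_{\alpha+\iota} \text{ for all } \alpha\in F^m\setminus\{0^m,\iota\}\}$. For $M\subset F^n$, $\Omega(M)$ is the set of words at Hamming distance at most $1$ from some element of $M$. *)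

theory Defs
  imports "HOL-Analysis.Finite_Cartesian_Product" "HOL-Library.Z2"
begin

text \<open>F^m is modelled as bit ^ 'm (m = CARD('m) >= 1). A word of F^n, n = 2^m - 1,
  indexed by the nonzero elements of F^m, is a function (bit ^ 'm) => bit whose value
  at the zero vector is 0 (a dummy coordinate).\<close>

type_synonym 'm word = "bit ^ 'm \<Rightarrow> bit"

definition words :: "'m::finite word set" where
  "words = {w. w 0 = 0}"

definition word_add :: "'m::finite word \<Rightarrow> 'm word \<Rightarrow> 'm word" where
  "word_add w v = (\<lambda>\<alpha>. w \<alpha> + v \<alpha>)"

definition unit_word :: "bit ^ 'm::finite \<Rightarrow> 'm word" where
  "unit_word \<iota> = (\<lambda>\<alpha>. if \<alpha> = \<iota> then 1 else 0)"

definition hamming_dist :: "'m::finite word \<Rightarrow> 'm word \<Rightarrow> nat" where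
  "hamming_dist w v = card {\<alpha>. \<alpha> \<noteq> 0 \<and> w \<alpha> \<noteq> v \<alpha>}"

definition hamming_code :: "'m::finite word set" where
  "hamming_code = {c \<in> words. (\<Sum>\<alpha>\<in>UNIV - {0}. c \<alpha> *s \<alpha>) = 0}"

definition R_code :: "bit ^ 'm::finite \<Rightarrow> 'm word set" where
  "R_code \<iota> = {c \<in> hamming_code. \<forall>\<alpha>. \<alpha> \<noteq> 0 \<and> \<alpha> \<noteq> \<iota> \<longrightarrow> c \<alpha> = c (\<alpha> + \<iota>)}"

definition translate :: "'m::finite word set \<Rightarrow> 'm word \<Rightarrow> 'm word set" where
  "translate M z = (\<lambda>c. word_add c z) ` M"

definition Omega :: "'m::finite word set \<Rightarrow> 'm word set" where
  "Omega M = {w \<in> words. \<exists>c\<in>M. hamming_dist w c \<le> 1}"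

end

theory Submission
  imports Defs "HOL-Library.Function_Algebras"
begin

text \<open>Write \<open>e \<beta>\<close> for the unit word at \<open>\<beta>\<close>. The code \<open>R \<iota>\<close> is linear and contains
  \<open>e \<beta> + e (\<beta> + \<iota>) + e \<iota>\<close> whenever \<open>\<beta> \<notin> {0, \<iota>}\<close>. A word within distance one of
  \<open>c + z\<close> agrees with \<open>c + z + e \<beta>\<close> off the dummy coordinate \<open>0\<close>, for some \<open>\<beta>\<close>
  (\<open>\<beta> = 0\<close> meaning no flip). If \<open>\<beta> \<in> {0, \<iota>}\<close> this is \<open>c + (z + e \<iota>) + e (\<beta> + \<iota>)\<close>
  there; otherwise adding the codeword above to \<open>c\<close> gives \<open>c' \<in> R \<iota>\<close> with
  \<open>c + z + e \<beta> = c' + (z + e \<iota>) + e (\<beta> + \<iota>)\<close>. So every word near \<open>R \<iota> + z\<close> is near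
  \<open>R \<iota> + z + e \<iota>\<close>, and the converse follows since adding \<open>e \<iota>\<close> is an involution.\<close>

instance bit :: finite
proof
  have "(UNIV :: bit set) = {0, 1}"
    using bit.exhaust by auto
  then show "finite (UNIV :: bit set)"
    by (metis finite.emptyI finite.insertI)
qed

declare add_bit_eq_xor [simp del]

lemma bit_add_self [simp]: "(x :: bit) + x = 0"
  by (cases x) simp_all

lemma bit_eq_add_1_iff [simp]: "(a :: bit) = b + 1 \<longleftrightarrow> a \<noteq> b"
  by (cases a; cases b) simp_all

lemma vec_bit_add_self [simp]: "(x :: bit ^ 'n) + x = 0"
  by (simp add: vec_eq_iff)

lemma fun_bit_add_self [simp]: "(w :: 'a \<Rightarrow> bit) + w = 0"
  by (simp add: fun_eq_iff)

lemma vec_bit_add_eq_iff: "(a :: bit ^ 'n) + b = c \<longleftrightarrow> a = c + b"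
  by (metis add.assoc add.right_neutral vec_bit_add_self)

lemma word_add_eq_plus: "word_add w v = w + v"
  by (simp add: word_add_def fun_eq_iff)

lemma card_le_1_iff_subset_singleton:
  "finite S \<Longrightarrow> card S \<le> 1 \<longleftrightarrow> (\<exists>\<beta>. S \<subseteq> {\<beta>})"
  by (cases "S = {}") (auto simp: card_le_Suc0_iff_eq)

lemma hamming_dist_le_1_iff:
  "hamming_dist w v \<le> 1 \<longleftrightarrow> (\<exists>\<beta>. \<forall>\<alpha>. \<alpha> \<noteq> 0 \<longrightarrow> w \<alpha> = (v + unit_word \<beta>) \<alpha>)"
proof -
  have "hamming_dist w v \<le> 1 \<longleftrightarrow> (\<exists>\<beta>. {\<alpha>. \<alpha> \<noteq> 0 \<and> w \<alpha> \<noteq> v \<alpha>} \<subseteq> {\<beta>})"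
    unfolding hamming_dist_def by (rule card_le_1_iff_subset_singleton) simp
  also have "\<dots> \<longleftrightarrow> (\<exists>\<beta>. \<forall>\<alpha>. \<alpha> \<noteq> 0 \<longrightarrow> w \<alpha> = (v + unit_word \<beta>) \<alpha>)"
  proof
    assume "\<exists>\<beta>. {\<alpha>. \<alpha> \<noteq> 0 \<and> w \<alpha> \<noteq> v \<alpha>} \<subseteq> {\<beta>}"
    then obtain \<beta> where \<beta>: "{\<alpha>. \<alpha> \<noteq> 0 \<and> w \<alpha> \<noteq> v \<alpha>} \<subseteq> {\<beta>}" ..
    show "\<exists>\<beta>. \<forall>\<alpha>. \<alpha> \<noteq> 0 \<longrightarrow> w \<alpha> = (v + unit_word \<beta>) \<alpha>"
    proof (cases "w \<beta> = v \<beta>")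
      case True
      then have "\<forall>\<alpha>. \<alpha> \<noteq> 0 \<longrightarrow> w \<alpha> = (v + unit_word 0) \<alpha>"
        using \<beta> by (auto simp: unit_word_def)
      then show ?thesis ..
    next
      case False
      then have "\<forall>\<alpha>. \<alpha> \<noteq> 0 \<longrightarrow> w \<alpha> = (v + unit_word \<beta>) \<alpha>"
        using \<beta> by (auto simp: unit_word_def)
      then show ?thesis ..
    qed
  next
    assume "\<exists>\<beta>. \<forall>\<alpha>. \<alpha> \<noteq> 0 \<longrightarrow> w \<alpha> = (v + unit_word \<beta>) \<alpha>"
    then show "\<exists>\<beta>. {\<alpha>. \<alpha> \<noteq> 0 \<and> w \<alpha> \<noteq> v \<alpha>} \<subseteq> {\<beta>}"
      by (auto simp: unit_word_def split: if_splits)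
  qed
  finally show ?thesis .
qed

lemma mem_Omega_translate_iff:
  "w \<in> Omega (translate M z) \<longleftrightarrow>
     w \<in> words \<and> (\<exists>c\<in>M. \<exists>\<beta>. \<forall>\<alpha>. \<alpha> \<noteq> 0 \<longrightarrow> w \<alpha> = (c + z + unit_word \<beta>) \<alpha>)"
  unfolding Omega_def translate_def word_add_eq_plus hamming_dist_le_1_iff by auto

definition syndrome :: "'m::finite word \<Rightarrow> bit ^ 'm" where
  "syndrome c = (\<Sum>\<alpha>\<in>UNIV - {0}. c \<alpha> *s \<alpha>)"

lemma syndrome_add: "syndrome (c + d) = syndrome c + syndrome d"
  by (simp add: syndrome_def vector_sadd_rdistrib sum.distrib)

lemma syndrome_unit_word:
  assumes "\<gamma> \<noteq> 0"
  shows "syndrome (unit_word \<gamma>) = \<gamma>"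
proof -
  have "syndrome (unit_word \<gamma>) = (\<Sum>\<alpha>\<in>UNIV - {0}. if \<alpha> = \<gamma> then \<alpha> else 0)"
    unfolding syndrome_def by (intro sum.cong) (auto simp: unit_word_def)
  also have "\<dots> = \<gamma>"
    using assms by (simp add: sum.delta')
  finally show ?thesis .
qed

lemma R_code_iff:
  "c \<in> R_code \<iota> \<longleftrightarrow> c 0 = 0 \<and> syndrome c = 0 \<and>
     (\<forall>\<alpha>. \<alpha> \<noteq> 0 \<and> \<alpha> \<noteq> \<iota> \<longrightarrow> c \<alpha> = c (\<alpha> + \<iota>))"
  by (auto simp: R_code_def hamming_code_def words_def syndrome_def)

lemma R_code_add: "c \<in> R_code \<iota> \<Longrightarrow> d \<in> R_code \<iota> \<Longrightarrow> c + d \<in> R_code \<iota>"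
  by (simp add: R_code_iff syndrome_add)

lemma unit_word_triple_in_R_code:
  fixes \<iota> \<beta> :: "bit ^ 'm::finite"
  assumes "\<iota> \<noteq> 0" "\<beta> \<noteq> 0" "\<beta> \<noteq> \<iota>"
  shows "unit_word \<beta> + unit_word (\<beta> + \<iota>) + unit_word \<iota> \<in> R_code \<iota>"
proof -
  have "\<beta> + \<iota> \<noteq> 0"
    using assms(3) by (simp add: vec_bit_add_eq_iff)
  then have "syndrome (unit_word \<beta> + unit_word (\<beta> + \<iota>) + unit_word \<iota>) = \<beta> + (\<beta> + \<iota>) + \<iota>"
    using assms by (simp add: syndrome_add syndrome_unit_word)
  also have "\<dots> = 0"
    by (simp add: add.assoc[symmetric])
  finally show ?thesis
    using assms \<open>\<beta> + \<iota> \<noteq> 0\<close>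
    by (auto simp: R_code_iff unit_word_def vec_bit_add_eq_iff add.assoc)
qed

lemma Omega_translate_R_code_subset:
  fixes \<iota> :: "bit ^ 'm::finite"
  assumes "\<iota> \<noteq> 0"
  shows "Omega (translate (R_code \<iota>) z) \<subseteq> Omega (translate (R_code \<iota>) (z + unit_word \<iota>))"
proof
  fix w
  assume "w \<in> Omega (translate (R_code \<iota>) z)"
  then obtain c \<beta> where w: "w \<in> words" and c: "c \<in> R_code \<iota>"
    and near: "\<forall>\<alpha>. \<alpha> \<noteq> 0 \<longrightarrow> w \<alpha> = (c + z + unit_word \<beta>) \<alpha>"
    by (auto simp: mem_Omega_translate_iff)
  have "\<exists>c'\<in>R_code \<iota>. \<forall>\<alpha>. \<alpha> \<noteq> 0 \<longrightarrow> w \<alpha> = (c' + (z + unit_word \<iota>) + unit_word (\<beta> + \<iota>)) \<alpha>"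
  proof (cases "\<beta> = 0 \<or> \<beta> = \<iota>")
    case True
    then have "\<forall>\<alpha>. \<alpha> \<noteq> 0 \<longrightarrow> unit_word \<beta> \<alpha> = unit_word \<iota> \<alpha> + unit_word (\<beta> + \<iota>) \<alpha>"
      by (auto simp: unit_word_def)
    then show ?thesis
      using c near by (auto simp: ac_simps)
  next
    case False
    let ?c' = "c + (unit_word \<beta> + unit_word (\<beta> + \<iota>) + unit_word \<iota>)"
    have "?c' \<in> R_code \<iota>"
      using False assms by (simp add: R_code_add[OF c] unit_word_triple_in_R_code)
    moreover have "?c' + (z + unit_word \<iota>) + unit_word (\<beta> + \<iota>) = c + z + unit_word \<beta>"
      by (simp add: fun_eq_iff ac_simps)
    ultimately show ?thesis
      using near by metis
  qed
  then show "w \<in> Omega (translate (R_code \<iota>) (z + unit_word \<iota>))"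
    using w by (auto simp: mem_Omega_translate_iff)
qed

theorem lemma1:
  fixes \<iota> :: "bit ^ 'm::finite" and z :: "'m word"
  assumes "\<iota> \<noteq> 0" and "z \<in> words"
  shows "Omega (translate (R_code \<iota>) z) = Omega (translate (R_code \<iota>) (word_add z (unit_word \<iota>)))"
proof
  show "Omega (translate (R_code \<iota>) z) \<subseteq> Omega (translate (R_code \<iota>) (word_add z (unit_word \<iota>)))"
    using Omega_translate_R_code_subset[OF assms(1)] by (simp add: word_add_eq_plus)
  show "Omega (translate (R_code \<iota>) (word_add z (unit_word \<iota>))) \<subseteq> Omega (translate (R_code \<iota>) z)"
    using Omega_translate_R_code_subset[OF assms(1), of "z + unit_word \<iota>"]
    by (simp add: word_add_eq_plus add.assoc)
qed

end
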